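(* Let $K>0$, $K\neq 1$, and let \[ A_5=\begin{pmatrix} K & 1 & 1\\ 1 & K & 1\\ 1 & 1 & 1\end{pmatrix}. \] Then \[ S(A_5)=\begin{pmatrix} a & b & c\\ b & a & c\\ c & c & d\end{pmatrix} \] with \[ a=\frac{K\left(2K+1-\sqrt{4K+5}\right)}{2(K^2-1)},\quad b=\frac{2K+1-\sqrt{4K+5}}{2(K^2-1)},\quad d=\frac{K+2-\sqrt{4K+5}}{K-1},\quad c=\sqrt{bd}. \] Equivalently $S(A_5)=XA_5X$ with $X=\operatorname{diag}(x,x,z)$, $x^2=b$, $z^2=d$. Moreover $\lim_{K\to\infty}S(A_5)=I_3$.
   Context: For a positive $n\times n$ matrix $A$, the Sinkhorn limit $S(A)$ is the unique doubly stochastic matrix of the form $XAY$ with $X,Y$ positive diagonal matrices; it is the limit of alternately row scaling (dividing each row by its row sum) and column scaling (dividing each column by its column sum) starting from $A$. For a positive symmetric matrix $A$ there is a unique positive diagonal $X$ with $S(A)=XAX$. *)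

theory Defs
  imports "HOL-Analysis.Analysis"
begin

text \<open>Square matrices are represented as real^'n^'n (rows indexed first).\<close>

definition doubly_stochastic :: "real^'n^'n \<Rightarrow> bool" where
  "doubly_stochastic S \<longleftrightarrow> (\<forall>i j. S $ i $ j \<ge> 0)
      \<and> (\<forall>i. (\<Sum>j\<in>UNIV. S $ i $ j) = 1) \<and> (\<forall>j. (\<Sum>i\<in>UNIV. S $ i $ j) = 1)"

definition diag_mat :: "real^'n \<Rightarrow> real^'n^'n" where
  "diag_mat x = (\<chi> i j. if i = j then x $ i else 0)"

text \<open>Sinkhorn limit: the unique doubly stochastic matrix of the form X A Y,
  X, Y positive diagonal.\<close>
definition sinkhorn :: "real^'n^'n \<Rightarrow> real^'n^'n" where
  "sinkhorn A = (THE S. doubly_stochastic S \<and>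
      (\<exists>x y. (\<forall>i. x $ i > 0) \<and> (\<forall>i. y $ i > 0) \<and> S = diag_mat x ** A ** diag_mat y))"

definition A5 :: "real \<Rightarrow> real^3^3" where
  "A5 K = vector [vector [K, 1, 1], vector [1, K, 1], vector [1, 1, 1]]"

end

theory Submission
  imports Defs "HOL-Real_Asymp.Real_Asymp"
begin

text \<open>A positive matrix admits at most one doubly stochastic diagonal scaling: if \<open>p\<close> is
  maximal at \<open>i\<^sub>0\<close> and \<open>q\<close> minimal at \<open>j\<^sub>0\<close>, column \<open>j\<^sub>0\<close> forces \<open>p i\<^sub>0 * q j\<^sub>0 \<ge> 1\<close>, so row
  \<open>i\<^sub>0\<close> is a positive weighted mean of the values \<open>p i\<^sub>0 * q j \<ge> 1\<close> equal to \<open>1\<close>, hence \<open>q\<close> is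
  constant and then so is \<open>p\<close>. For \<open>A5 K\<close> the scaling is symmetric, \<open>X = diag(x, x, z)\<close>,
  and the two row equations \<open>(K + 1) x\<^sup>2 + x z = 1\<close>, \<open>2 x z + z\<^sup>2 = 1\<close> are solved in terms of
  \<open>s = sqrt (4 K + 5)\<close>: \<open>x\<^sup>2 = 4 / ((s + 3) (s - 1))\<close>, \<open>z\<^sup>2 = (s - 1) / (s + 3)\<close>,
  \<open>x z = 2 / (s + 3)\<close>.\<close>

lemma diag_mat_mult_entry:
  "(diag_mat x ** A ** diag_mat y) $ i $ j = x $ i * A $ i $ j * y $ j"
proof -
  have "\<And>P a b. (if P then a else 0) * (b::real) = (if P then a * b else 0)"
       "\<And>P a b. b * (if P then a else 0) = (if P then b * a else (0::real))" by auto
  then show ?thesis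
    unfolding matrix_matrix_mult_def diag_mat_def by (simp add: sum.delta sum.delta')
qed

lemma weighted_mean_at_lower_bound:
  fixes w f :: "'a \<Rightarrow> real"
  assumes "finite A" and w: "\<And>j. j \<in> A \<Longrightarrow> w j > 0" and lb: "\<And>j. j \<in> A \<Longrightarrow> m \<le> f j"
    and mean: "(\<Sum>j\<in>A. w j * f j) = m * (\<Sum>j\<in>A. w j)" and "j \<in> A"
  shows "f j = m"
proof -
  have sum0: "(\<Sum>j\<in>A. w j * (f j - m)) = 0"
    using mean by (simp add: algebra_simps sum_subtractf sum_distrib_left)
  have "w j * (f j - m) = 0"
    by (rule sum_nonneg_0[OF \<open>finite A\<close> _ sum0 \<open>j \<in> A\<close>]) (simp add: w lb less_imp_le)
  then show ?thesis using w[OF \<open>j \<in> A\<close>] by simp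
qed

lemma doubly_stochastic_scaling_unique:
  fixes S :: "real^'n^'n"
  assumes S_pos: "\<And>i j. S $ i $ j > 0" and S: "doubly_stochastic S"
    and p: "\<And>i. p $ i > 0" and q: "\<And>j. q $ j > 0"
    and T: "doubly_stochastic (diag_mat p ** S ** diag_mat q)"
  shows "diag_mat p ** S ** diag_mat q = S"
proof -
  have S_row: "(\<Sum>j\<in>UNIV. S $ i $ j) = 1" and S_col: "(\<Sum>i\<in>UNIV. S $ i $ j) = 1" for i j
    using S unfolding doubly_stochastic_def by auto
  have T_row: "(\<Sum>j\<in>UNIV. p $ i * S $ i $ j * q $ j) = 1"
   and T_col: "(\<Sum>i\<in>UNIV. p $ i * S $ i $ j * q $ j) = 1" for i j
    using T unfolding doubly_stochastic_def diag_mat_mult_entry by auto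
  obtain i0 where "is_arg_min (\<lambda>i. - p $ i) (\<lambda>_. True) i0"
    using ex_is_arg_min_if_finite[of UNIV "\<lambda>i. - p $ i"] by auto
  then have i0: "p $ i \<le> p $ i0" for i by (simp add: is_arg_min_linorder)
  obtain j0 where "is_arg_min (($) q) (\<lambda>_. True) j0"
    using ex_is_arg_min_if_finite[of UNIV "($) q"] by auto
  then have j0: "q $ j0 \<le> q $ j" for j by (simp add: is_arg_min_linorder)
  have "1 = (\<Sum>i\<in>UNIV. p $ i * S $ i $ j0 * q $ j0)" by (simp add: T_col)
  also have "\<dots> \<le> (\<Sum>i\<in>UNIV. p $ i0 * q $ j0 * S $ i $ j0)"
    using i0 q S_pos by (intro sum_mono) (simp add: mult.commute mult_left_mono less_imp_le)
  finally have "1 \<le> p $ i0 * q $ j0" by (simp add: sum_distrib_left[symmetric] S_col)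
  moreover have "p $ i0 * q $ j0 \<le> p $ i0 * q $ j" for j
    using j0 p by (simp add: less_imp_le)
  ultimately have q_lb: "1 \<le> p $ i0 * q $ j" for j
    by (meson order_trans)
  have pq: "p $ i0 * q $ j = 1" for j
  proof (rule weighted_mean_at_lower_bound[where w = "\<lambda>j. S $ i0 $ j" and A = UNIV
        and f = "\<lambda>j. p $ i0 * q $ j" and m = 1])
    show "(\<Sum>j\<in>UNIV. S $ i0 $ j * (p $ i0 * q $ j)) = 1 * (\<Sum>j\<in>UNIV. S $ i0 $ j)"
      using T_row[of i0] S_row[of i0] by (simp add: mult_ac)
  qed (simp_all add: S_pos q_lb)
  have q_const: "q $ j = 1 / p $ i0" for j
    using pq[of j] p[of i0] by (simp add: field_simps)
  have p_const: "p $ i = p $ i0" for i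
  proof -
    have "1 = (\<Sum>j\<in>UNIV. p $ i * S $ i $ j * q $ j)" by (rule T_row[symmetric])
    also have "\<dots> = p $ i / p $ i0 * (\<Sum>j\<in>UNIV. S $ i $ j)"
      by (simp add: q_const sum_distrib_left)
    finally show ?thesis using S_row[of i] p[of i0] by simp
  qed
  have "p $ i * q $ j = 1" for i j
    using p_const[of i] pq[of j] by simp
  then show ?thesis by (simp add: vec_eq_iff diag_mat_mult_entry)
qed

lemma sinkhorn_eqI:
  fixes A S :: "real^'n^'n"
  assumes A_pos: "\<And>i j. A $ i $ j > 0" and u: "\<And>i. u $ i > 0" and v: "\<And>i. v $ i > 0"
    and S: "S = diag_mat u ** A ** diag_mat v" and ds: "doubly_stochastic S"
  shows "sinkhorn A = S"
  unfolding sinkhorn_def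
proof (rule the_equality)
  show "doubly_stochastic S \<and> (\<exists>x y. (\<forall>i. x $ i > 0) \<and> (\<forall>i. y $ i > 0) \<and> S = diag_mat x ** A ** diag_mat y)"
    using ds u v S by blast
next
  fix T assume "doubly_stochastic T \<and>
    (\<exists>x y. (\<forall>i. x $ i > 0) \<and> (\<forall>i. y $ i > 0) \<and> T = diag_mat x ** A ** diag_mat y)"
  then obtain x y where ds_T: "doubly_stochastic T" and x: "\<forall>i. x $ i > 0" and y: "\<forall>i. y $ i > 0"
    and T: "T = diag_mat x ** A ** diag_mat y" by blast
  define p :: "real^'n" where "p = (\<chi> i. x $ i / u $ i)"
  define q :: "real^'n" where "q = (\<chi> j. y $ j / v $ j)"
  have "u $ i \<noteq> 0" "v $ i \<noteq> 0" for i
    using u v by (metis less_irrefl)+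
  then have T_rescaled: "T = diag_mat p ** S ** diag_mat q"
    by (simp add: vec_eq_iff T S p_def q_def diag_mat_mult_entry)
  have "diag_mat p ** S ** diag_mat q = S"
    using A_pos u v x y ds ds_T T_rescaled
    by (intro doubly_stochastic_scaling_unique) (auto simp: S p_def q_def diag_mat_mult_entry)
  then show "T = S" using T_rescaled by simp
qed

lemma A5_symmetric_scaling:
  "diag_mat (vector [x, x, z]) ** A5 K ** diag_mat (vector [x, x, z]) =
     vector [vector [K * x\<^sup>2, x\<^sup>2, x * z], vector [x\<^sup>2, K * x\<^sup>2, x * z], vector [x * z, x * z, z\<^sup>2]]"
  by (simp add: vec_eq_iff forall_3 diag_mat_mult_entry A5_def power2_eq_square algebra_simps)

lemma sinkhorn_A5_symmetric:
  fixes K x z :: real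
  assumes "K > 0" "x > 0" "z > 0"
    and "(K + 1) * x\<^sup>2 + x * z = 1" and "2 * (x * z) + z\<^sup>2 = 1"
  shows "sinkhorn (A5 K) = diag_mat (vector [x, x, z]) ** A5 K ** diag_mat (vector [x, x, z])"
proof -
  have "\<forall>i j. A5 K $ i $ j > 0" "\<forall>i. (vector [x, x, z] :: real^3) $ i > 0"
    using assms by (simp_all add: A5_def forall_3)
  then have A_pos: "\<And>i j. A5 K $ i $ j > 0" and X_pos: "\<And>i. (vector [x, x, z] :: real^3) $ i > 0"
    by blast+
  have "K * x\<^sup>2 + x\<^sup>2 + x * z = 1" "x\<^sup>2 + K * x\<^sup>2 + x * z = 1" "x * z + x * z + z\<^sup>2 = 1"
    using assms by (simp_all add: algebra_simps)
  moreover have "0 \<le> K * x\<^sup>2" "0 \<le> x * z"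
    using assms by simp_all
  ultimately have "doubly_stochastic (diag_mat (vector [x, x, z]) ** A5 K ** diag_mat (vector [x, x, z]))"
    unfolding A5_symmetric_scaling doubly_stochastic_def by (simp add: forall_3 sum_3)
  then show ?thesis by (rule sinkhorn_eqI[OF A_pos X_pos X_pos refl])
qed

lemma A5_scaling_closed_forms:
  fixes K s :: real
  assumes "K > 0" "K \<noteq> 1" and s: "s = sqrt (4 * K + 5)"
  shows "(2 * K + 1 - s) / (2 * (K\<^sup>2 - 1)) = 4 / ((s + 3) * (s - 1))"
    and "(K + 2 - s) / (K - 1) = (s - 1) / (s + 3)"
proof -
  have s2: "s\<^sup>2 = 4 * K + 5" using s \<open>K > 0\<close> by simp
  have "s > 1" unfolding s using \<open>K > 0\<close> by (simp add: real_less_rsqrt)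
  moreover have "K\<^sup>2 \<noteq> 1" using \<open>K > 0\<close> \<open>K \<noteq> 1\<close> by (auto simp: power2_eq_1_iff)
  ultimately have nonzero: "2 * (K\<^sup>2 - 1) \<noteq> 0" "(s + 3) * (s - 1) \<noteq> 0" "K - 1 \<noteq> 0" "s + 3 \<noteq> 0"
    using \<open>K \<noteq> 1\<close> by auto
  show "(2 * K + 1 - s) / (2 * (K\<^sup>2 - 1)) = 4 / ((s + 3) * (s - 1))"
    unfolding frac_eq_eq[OF nonzero(1,2)] using s2 by algebra
  show "(K + 2 - s) / (K - 1) = (s - 1) / (s + 3)"
    unfolding frac_eq_eq[OF nonzero(3,4)] using s2 by algebra
qed

lemma sinkhorn_A5_closed_form:
  fixes K a b c d :: real
  assumes "K > 0" "K \<noteq> 1"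
    and a: "a = K * (2 * K + 1 - sqrt (4 * K + 5)) / (2 * (K\<^sup>2 - 1))"
    and b: "b = (2 * K + 1 - sqrt (4 * K + 5)) / (2 * (K\<^sup>2 - 1))"
    and d: "d = (K + 2 - sqrt (4 * K + 5)) / (K - 1)"
    and c: "c = sqrt (b * d)"
  shows "b > 0" and "d > 0"
    and "sinkhorn (A5 K) =
      diag_mat (vector [sqrt b, sqrt b, sqrt d]) ** A5 K ** diag_mat (vector [sqrt b, sqrt b, sqrt d])"
    and "sinkhorn (A5 K) = vector [vector [a, b, c], vector [b, a, c], vector [c, c, d]]"
proof -
  define s where "s = sqrt (4 * K + 5)"
  have s2: "s\<^sup>2 = 4 * K + 5" and "s > 1"
    unfolding s_def using \<open>K > 0\<close> by (simp_all add: real_less_rsqrt)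
  have b_s: "b = 4 / ((s + 3) * (s - 1))" and d_s: "d = (s - 1) / (s + 3)"
    unfolding b d s_def using A5_scaling_closed_forms[OF \<open>K > 0\<close> \<open>K \<noteq> 1\<close> refl] by simp_all
  show "b > 0" "d > 0" unfolding b_s d_s using \<open>s > 1\<close> by simp_all
  have nonzero: "s - 1 \<noteq> 0" "s + 3 \<noteq> 0" using \<open>s > 1\<close> by simp_all
  have c_s: "c = 2 / (s + 3)"
  proof -
    have "b * d = (2 / (s + 3))\<^sup>2"
      unfolding b_s d_s using nonzero by (simp add: divide_simps power2_eq_square)
    then show ?thesis unfolding c using \<open>s > 1\<close> by simp
  qed
  define x z where "x = sqrt b" and "z = sqrt d"
  have "x > 0" "z > 0" "x\<^sup>2 = b" "z\<^sup>2 = d" "x * z = c"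
    unfolding x_def z_def c using \<open>b > 0\<close> \<open>d > 0\<close> by (simp_all add: real_sqrt_mult)
  moreover have "(K + 1) * b + c = 1"
    unfolding b_s c_s using nonzero by (simp add: divide_simps) (use s2 in algebra)
  moreover have "2 * c + d = 1"
    unfolding c_s d_s using nonzero by (simp add: divide_simps) (simp add: algebra_simps)
  ultimately show scaling: "sinkhorn (A5 K) =
      diag_mat (vector [sqrt b, sqrt b, sqrt d]) ** A5 K ** diag_mat (vector [sqrt b, sqrt b, sqrt d])"
    using sinkhorn_A5_symmetric[OF \<open>K > 0\<close>, of x z] by (simp add: x_def z_def)
  have "a = K * b" unfolding a b by simp
  with scaling \<open>x\<^sup>2 = b\<close> \<open>z\<^sup>2 = d\<close> \<open>x * z = c\<close>
  show "sinkhorn (A5 K) = vector [vector [a, b, c], vector [b, a, c], vector [c, c, d]]"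
    unfolding A5_symmetric_scaling by (simp add: x_def z_def)
qed

lemma tendsto_symmetric_3x3:
  fixes f g h k :: "'a \<Rightarrow> real"
  assumes "(f \<longlongrightarrow> \<alpha>) F" "(g \<longlongrightarrow> \<beta>) F" "(h \<longlongrightarrow> \<gamma>) F" "(k \<longlongrightarrow> \<delta>) F"
  shows "((\<lambda>t. vector [vector [f t, g t, h t], vector [g t, f t, h t], vector [h t, h t, k t]] :: real^3^3)
    \<longlongrightarrow> vector [vector [\<alpha>, \<beta>, \<gamma>], vector [\<beta>, \<alpha>, \<gamma>], vector [\<gamma>, \<gamma>, \<delta>]]) F"
proof (intro vec_tendstoI)
  fix i j :: 3
  show "((\<lambda>t. (vector [vector [f t, g t, h t], vector [g t, f t, h t], vector [h t, h t, k t]] :: real^3^3) $ i $ j)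
    \<longlongrightarrow> (vector [vector [\<alpha>, \<beta>, \<gamma>], vector [\<beta>, \<alpha>, \<gamma>], vector [\<gamma>, \<gamma>, \<delta>]] :: real^3^3) $ i $ j) F"
    using exhaust_3[of i] exhaust_3[of j] assms by auto
qed

lemma sinkhorn_A5_tendsto_identity: "((\<lambda>L. sinkhorn (A5 L)) \<longlongrightarrow> mat 1) at_top"
proof -
  define b d :: "real \<Rightarrow> real"
    where "b L = (2 * L + 1 - sqrt (4 * L + 5)) / (2 * (L\<^sup>2 - 1))"
      and "d L = (L + 2 - sqrt (4 * L + 5)) / (L - 1)" for L
  have closed_form: "\<forall>\<^sub>F L in at_top. sinkhorn (A5 L) = vector [vector [L * b L, b L, sqrt (b L * d L)],
      vector [b L, L * b L, sqrt (b L * d L)], vector [sqrt (b L * d L), sqrt (b L * d L), d L]]"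
    using eventually_gt_at_top[of 1]
    by eventually_elim (rule sinkhorn_A5_closed_form(4); simp add: b_def d_def)
  have "mat 1 = (vector [vector [1, 0, 0], vector [0, 1, 0], vector [0, 0, 1]] :: real^3^3)"
    by (simp add: vec_eq_iff forall_3 mat_def)
  moreover have "((\<lambda>L. L * b L) \<longlongrightarrow> 1) at_top" "(b \<longlongrightarrow> 0) at_top"
    "((\<lambda>L. sqrt (b L * d L)) \<longlongrightarrow> 0) at_top" "(d \<longlongrightarrow> 1) at_top"
    unfolding b_def d_def by real_asymp+
  ultimately show ?thesis
    unfolding tendsto_cong[OF closed_form] by (simp add: tendsto_symmetric_3x3)
qed

theorem mainTheorem10:
  fixes K :: real
  assumes "K > 0" and "K \<noteq> 1"
  defines "a \<equiv> K * (2*K + 1 - sqrt (4*K + 5)) / (2 * (K^2 - 1))"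
      and "b \<equiv> (2*K + 1 - sqrt (4*K + 5)) / (2 * (K^2 - 1))"
      and "d \<equiv> (K + 2 - sqrt (4*K + 5)) / (K - 1)"
  defines "c \<equiv> sqrt (b * d)"
  shows "sinkhorn (A5 K) = vector [vector [a, b, c], vector [b, a, c], vector [c, c, d]]
    \<and> (\<exists>x z. x > 0 \<and> z > 0 \<and> x^2 = b \<and> z^2 = d \<and>
           sinkhorn (A5 K) = diag_mat (vector [x, x, z]) ** A5 K ** diag_mat (vector [x, x, z]))
    \<and> ((\<lambda>L. sinkhorn (A5 L)) \<longlongrightarrow> mat 1) at_top"
proof (intro conjI)
  note closed_form = sinkhorn_A5_closed_form[OF assms(1,2) a_def[THEN meta_eq_to_obj_eq]
    b_def[THEN meta_eq_to_obj_eq] d_def[THEN meta_eq_to_obj_eq] c_def[THEN meta_eq_to_obj_eq]]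
  show "sinkhorn (A5 K) = vector [vector [a, b, c], vector [b, a, c], vector [c, c, d]]"
    by (rule closed_form(4))
  show "\<exists>x z. x > 0 \<and> z > 0 \<and> x^2 = b \<and> z^2 = d \<and>
      sinkhorn (A5 K) = diag_mat (vector [x, x, z]) ** A5 K ** diag_mat (vector [x, x, z])"
    using closed_form(1-3) by (intro exI[of _ "sqrt b"] exI[of _ "sqrt d"]) simp
  show "((\<lambda>L. sinkhorn (A5 L)) \<longlongrightarrow> mat 1) at_top"
    by (rule sinkhorn_A5_tendsto_identity)
qed

end
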